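(* Let $G=(V,E)$ be a finite connected graph (multiple edges and loops allowed) and $\Delta_G$ its graph Laplacian, $\Delta_Gx(v)=\sum_{\{v,w\}\in E}(x(v)-x(w))$, regarded both as a map $\mathbb{R}^V\to\mathbb{R}^V$ and $(\mathbb{R}/\mathbb{Z})^V\to(\mathbb{R}/\mathbb{Z})^V$. Let $X_G=\{x\in(\mathbb{R}/\mathbb{Z})^V:\Delta_Gx=0\}$ (the harmonic mod $1$ points) and $|X_G|$ its number of connected components. Then $|X_G|=|V|^{-1}\det^*(\Delta_G)$, where $\det^*(\Delta_G)$ is the product of the nonzero eigenvalues of $\Delta_G$ on $\mathbb{R}^V$. (Consequently $|X_G|$ equals the number of spanning trees of $G$.)
   Context: In the Laplacian sum each edge $\{v,w\}$ is counted with multiplicity; loops contribute $0$. *)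

theory Defs
  imports "HOL-Analysis.Analysis" "HOL-Computational_Algebra.Polynomial"
begin

text \<open>A finite multigraph (loops allowed) on the finite vertex type 'v is given by a
  symmetric edge-multiplicity function em v w = number of edges between v and w.\<close>

definition multigraph :: "('v::finite \<Rightarrow> 'v \<Rightarrow> nat) \<Rightarrow> bool" where
  "multigraph em \<longleftrightarrow> (\<forall>v w. em v w = em w v)"

definition graph_connected :: "('v::finite \<Rightarrow> 'v \<Rightarrow> nat) \<Rightarrow> bool" where
  "graph_connected em \<longleftrightarrow> (\<forall>u w. (u, w) \<in> {(a, b). 0 < em a b}\<^sup>*)"

definition laplacian :: "('v::finite \<Rightarrow> 'v \<Rightarrow> nat) \<Rightarrow> real^'v \<Rightarrow> real^'v" where
  "laplacian em x = (\<chi> v. \<Sum>w\<in>UNIV. real (em v w) * (x $ v - x $ w))"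

definition charpoly :: "real^'n^'n \<Rightarrow> real poly" where
  "charpoly A = det (\<chi> i j. (if i = j then [:0, 1:] else 0) - [:A $ i $ j:])"

definition det_star :: "real^'n^'n \<Rightarrow> real" where
  "det_star A = prod_mset (filter_mset (\<lambda>e. e \<noteq> 0) (proots (charpoly A)))"

text \<open>The torus (R/Z)^V is realised (homeomorphically, as topological group) as the image of
  R^V under x \<mapsto> (exp(2 pi i x_v))_v inside C^V.\<close>
definition torus_exp :: "real^'v::finite \<Rightarrow> complex^'v" where
  "torus_exp x = (\<chi> v. cis (2 * pi * x $ v))"

text \<open>Harmonic mod 1 points: x in (R/Z)^V with Laplacian x = 0 mod 1, i.e. images of
  real lifts whose Laplacian is integral.\<close>
definition harmonic_mod1 :: "('v::finite \<Rightarrow> 'v \<Rightarrow> nat) \<Rightarrow> (complex^'v) set" where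
  "harmonic_mod1 em = torus_exp ` {x. \<forall>v. laplacian em x $ v \<in> \<int>}"

end

theory Submission
  imports Defs "HOL-Computational_Algebra.Fundamental_Theorem_Algebra"
begin

text \<open>
  Let \<open>L\<close> be the Laplacian of a finite connected multigraph on the vertex set \<open>V\<close>,
  \<open>n = |V|\<close>, and fix a root vertex \<open>r\<close>. Write \<open>L\<^sub>r\<close> for the integer matrix obtained
  from \<open>L\<close> by replacing row and column \<open>r\<close> with those of the identity. Both sides of
  the theorem are expressed through \<open>|det L\<^sub>r|\<close>, in three independent parts:

  \<^item> Counting: for any nonsingular integer matrix \<open>M\<close>, the set of \<open>x \<in> [0,1)\<^sup>V\<close> with
    \<open>M x \<in> \<int>\<^sup>V\<close> has exactly \<open>|det M|\<close> elements. Both quantities are invariant under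
    unimodular equivalence, and every integer matrix is unimodularly equivalent to a
    diagonal one, for which the count is a product.
  \<^item> Spectral: for a symmetric positive semidefinite matrix with zero row sums and
    nonsingular \<open>L\<^sub>r\<close>, the product of the nonzero eigenvalues is \<open>n |det L\<^sub>r|\<close>; this uses
    \<open>t det (t - L - J) = (t - n) det (t - L)\<close> and \<open>det (L + J) = n\<^sup>2 det L\<^sub>r\<close>
    (\<open>J\<close> the all-ones matrix) together with the reality of the eigenvalues.
  \<^item> Topology: the harmonic points mod 1 are the disjoint union of the circles
    \<open>s + \<real>(1,\<dots>,1)\<close> mod 1, where \<open>s\<close> ranges over the points counted above for
    \<open>M = L\<^sub>r\<close>; these circles are compact and connected, hence they are the components.
\<close>

section \<open>Fractional solutions of integer linear systems\<close>

definition int_vec :: "real^'n \<Rightarrow> bool" where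
  "int_vec x \<longleftrightarrow> (\<forall>i. x $ i \<in> \<int>)"

definition unit_box :: "(real^'n) set" where
  "unit_box = {x. \<forall>i. 0 \<le> x $ i \<and> x $ i < 1}"

definition frac_vec :: "real^'n \<Rightarrow> real^'n" where
  "frac_vec x = (\<chi> i. frac (x $ i))"

definition of_int_mat :: "int^'n^'m \<Rightarrow> real^'n^'m" where
  "of_int_mat M = (\<chi> i j. of_int (M $ i $ j))"

definition frac_points :: "int^'n::finite^'n \<Rightarrow> (real^'n) set" where
  "frac_points M = {x \<in> unit_box. int_vec (of_int_mat M *v x)}"

lemma int_vec_diff: "int_vec x \<Longrightarrow> int_vec y \<Longrightarrow> int_vec (x - y)"
  by (auto simp: int_vec_def)

lemma int_vec_of_int_mat_mult:
  "int_vec x \<Longrightarrow> int_vec (of_int_mat M *v x)"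
  by (auto simp: int_vec_def of_int_mat_def matrix_vector_mult_def intro!: Ints_mult)

lemma of_int_mat_mult: "of_int_mat (A ** B) = of_int_mat A ** of_int_mat B"
  by (simp add: of_int_mat_def matrix_matrix_mult_def vec_eq_iff)

lemma of_int_mat_1: "of_int_mat (mat 1) = mat 1"
  by (simp add: of_int_mat_def mat_def vec_eq_iff)

lemma frac_vec_unit_box: "frac_vec x \<in> unit_box"
  by (simp add: frac_vec_def unit_box_def frac_lt_1)

lemma int_vec_minus_frac_vec: "int_vec (x - frac_vec x)"
  by (simp add: int_vec_def frac_vec_def frac_def)

lemma frac_vec_eqI:
  assumes "y \<in> unit_box" "int_vec (x - y)"
  shows "frac_vec x = y"
proof -
  have "frac (x $ i) = y $ i" for i
  proof -
    obtain n where "x $ i - y $ i = of_int n"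
      using assms(2) by (auto simp: int_vec_def elim!: Ints_cases)
    then have "frac (x $ i) = frac (y $ i)"
      by (metis diff_add_cancel frac_add_of_int_right add.commute)
    then show ?thesis using assms(1) by (simp add: unit_box_def frac_eq)
  qed
  then show ?thesis by (simp add: frac_vec_def vec_eq_iff)
qed

definition unimodular :: "int^'n::finite^'n \<Rightarrow> bool" where
  "unimodular U \<longleftrightarrow> (\<exists>V. U ** V = mat 1 \<and> V ** U = mat 1)"

lemma unimodular_mult: "unimodular U \<Longrightarrow> unimodular V \<Longrightarrow> unimodular (U ** V)"
  unfolding unimodular_def by (metis matrix_mul_assoc matrix_mul_lid)

lemma unimodular_transpose: "unimodular U \<Longrightarrow> unimodular (transpose U)"
  unfolding unimodular_def by (metis matrix_transpose_mul transpose_mat)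

lemma unimodular_1: "unimodular (mat 1)"
  by (auto simp: unimodular_def)

lemma abs_det_unimodular: "unimodular U \<Longrightarrow> \<bar>det U\<bar> = 1"
  unfolding unimodular_def by (metis det_I det_mul zmult_eq_1_iff abs_1 abs_neg_one)

lemma frac_points_unimodular_left:
  assumes "unimodular U"
  shows "frac_points (U ** M) = frac_points M"
proof -
  obtain V where V: "V ** U = mat 1" using assms by (auto simp: unimodular_def)
  have "int_vec (of_int_mat (U ** M) *v x) \<longleftrightarrow> int_vec (of_int_mat M *v x)" for x
  proof
    assume "int_vec (of_int_mat (U ** M) *v x)"
    then have "int_vec (of_int_mat (V ** (U ** M)) *v x)"
      by (simp add: of_int_mat_mult matrix_vector_mul_assoc[symmetric] int_vec_of_int_mat_mult)
    then show "int_vec (of_int_mat M *v x)"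
      by (simp add: matrix_mul_assoc V)
  qed (simp add: of_int_mat_mult matrix_vector_mul_assoc[symmetric] int_vec_of_int_mat_mult)
  then show ?thesis by (simp add: frac_points_def)
qed

text \<open>Right multiplication by a unimodular \<open>V\<close> is compensated by the bijection
  \<open>x \<mapsto> frac (V x)\<close> between the solution sets.\<close>
lemma card_frac_points_unimodular_right:
  assumes "unimodular V"
  shows "card (frac_points (M ** V)) = card (frac_points M)"
proof -
  obtain W where VW: "V ** W = mat 1" and WV: "W ** V = mat 1"
    using assms by (auto simp: unimodular_def)
  have maps: "frac_vec (of_int_mat A *v x) \<in> frac_points N"
    if "x \<in> frac_points (N ** A)" for A N :: "int^'n^'n" and x
  proof -
    let ?y = "of_int_mat A *v x"
    have "of_int_mat N *v frac_vec ?y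
        = of_int_mat (N ** A) *v x - of_int_mat N *v (?y - frac_vec ?y)"
      by (simp add: of_int_mat_mult matrix_vector_mult_diff_distrib matrix_vector_mul_assoc)
    also have "int_vec \<dots>"
      using that int_vec_of_int_mat_mult[OF int_vec_minus_frac_vec]
      by (intro int_vec_diff) (simp_all add: frac_points_def)
    finally show ?thesis by (simp add: frac_points_def frac_vec_unit_box)
  qed
  have inverse: "frac_vec (of_int_mat B *v frac_vec (of_int_mat A *v x)) = x"
    if "x \<in> unit_box" "B ** A = mat 1" for A B :: "int^'n^'n" and x
  proof (rule frac_vec_eqI[OF that(1)])
    let ?y = "of_int_mat A *v x"
    have "of_int_mat B *v frac_vec ?y - x = - (of_int_mat B *v (?y - frac_vec ?y))"
      using that(2)
      by (simp add: matrix_vector_mult_diff_distrib matrix_vector_mul_assoc of_int_mat_1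
          flip: of_int_mat_mult)
    also have "int_vec \<dots>"
      using int_vec_of_int_mat_mult[OF int_vec_minus_frac_vec] by (simp add: int_vec_def)
    finally show "int_vec (of_int_mat B *v frac_vec ?y - x)" .
  qed
  have "bij_betw (\<lambda>x. frac_vec (of_int_mat V *v x)) (frac_points (M ** V)) (frac_points M)"
  proof (rule bij_betw_byWitness[where f' = "\<lambda>y. frac_vec (of_int_mat W *v y)"])
    show "\<forall>x\<in>frac_points (M ** V). frac_vec (of_int_mat W *v frac_vec (of_int_mat V *v x)) = x"
      using inverse[OF _ WV] by (simp add: frac_points_def)
    show "\<forall>y\<in>frac_points M. frac_vec (of_int_mat V *v frac_vec (of_int_mat W *v y)) = y"
      using inverse[OF _ VW] by (simp add: frac_points_def)
    show "(\<lambda>x. frac_vec (of_int_mat V *v x)) ` frac_points (M ** V) \<subseteq> frac_points M"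
      using maps by blast
    show "(\<lambda>y. frac_vec (of_int_mat W *v y)) ` frac_points M \<subseteq> frac_points (M ** V)"
      using maps[of _ "M ** V" W] by (auto simp: matrix_mul_assoc[symmetric] VW)
  qed
  then show ?thesis by (rule bij_betw_same_card)
qed

definition unimodular_equiv :: "int^'n::finite^'n \<Rightarrow> int^'n^'n \<Rightarrow> bool" where
  "unimodular_equiv M N \<longleftrightarrow> (\<exists>U V. unimodular U \<and> unimodular V \<and> N = U ** M ** V)"

lemma unimodular_equiv_refl: "unimodular_equiv M M"
  unfolding unimodular_equiv_def using unimodular_1 by force

lemma unimodular_equiv_trans:
  "unimodular_equiv M N \<Longrightarrow> unimodular_equiv N P \<Longrightarrow> unimodular_equiv M P"
  unfolding unimodular_equiv_def by (metis unimodular_mult matrix_mul_assoc)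

lemma unimodular_equiv_transpose:
  "unimodular_equiv M N \<Longrightarrow> unimodular_equiv (transpose M) (transpose N)"
  unfolding unimodular_equiv_def
  by (metis unimodular_transpose matrix_transpose_mul matrix_mul_assoc)

lemma unimodular_equiv_abs_det: "unimodular_equiv M N \<Longrightarrow> \<bar>det N\<bar> = \<bar>det M\<bar>"
  unfolding unimodular_equiv_def by (auto simp: det_mul abs_mult abs_det_unimodular)

lemma unimodular_equiv_card_frac_points:
  "unimodular_equiv M N \<Longrightarrow> card (frac_points N) = card (frac_points M)"
  unfolding unimodular_equiv_def
  by (auto simp: frac_points_unimodular_left card_frac_points_unimodular_right
      matrix_mul_assoc[symmetric])

text \<open>Elementary row operations, realised as left multiplication by unimodular matrices.
  Column operations are obtained by transposition.\<close>
definition add_row :: "'n \<Rightarrow> 'n \<Rightarrow> int \<Rightarrow> int^'n^'n \<Rightarrow> int^'n::finite^'n" where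
  "add_row i j q M = (\<chi> r c. if r = i then M $ i $ c + q * M $ j $ c else M $ r $ c)"

definition swap_rows :: "'n \<Rightarrow> 'n \<Rightarrow> int^'n^'n \<Rightarrow> int^'n::finite^'n" where
  "swap_rows i j M = (\<chi> r. M $ Transposition.transpose i j r)"

lemma add_row_nth [simp]:
  "add_row i j q M $ r $ c = (if r = i then M $ i $ c + q * M $ j $ c else M $ r $ c)"
  by (simp add: add_row_def)

lemma swap_rows_nth [simp]: "swap_rows i j M $ r $ c = M $ Transposition.transpose i j r $ c"
  by (simp add: swap_rows_def)

lemma add_row_mult: "add_row i j q M = add_row i j q (mat 1) ** M"
proof -
  have "(add_row i j q (mat 1) ** M) $ r $ c
      = (\<Sum>l\<in>UNIV. (if r = l then M $ l $ c else 0)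
          + (if r = i \<and> j = l then q * M $ l $ c else 0))" for r c
    unfolding matrix_matrix_mult_def by (auto simp: mat_def distrib_right intro!: sum.cong)
  then show ?thesis by (simp add: vec_eq_iff sum.distrib)
qed

lemma swap_rows_mult: "swap_rows i j M = swap_rows i j (mat 1) ** M"
proof -
  have "(swap_rows i j (mat 1) ** M) $ r $ c = M $ Transposition.transpose i j r $ c" for r c
    unfolding matrix_matrix_mult_def by (simp add: mat_def of_bool_def[symmetric])
  then show ?thesis by (simp add: vec_eq_iff)
qed

lemma unimodular_equiv_add_row:
  assumes "i \<noteq> j"
  shows "unimodular_equiv M (add_row i j q M)"
proof -
  have "add_row i j q (mat 1) ** add_row i j (- q) (mat 1) = mat 1"
    "add_row i j (- q) (mat 1) ** add_row i j q (mat 1) = mat 1"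
    unfolding add_row_mult[of i j q "add_row i j _ (mat 1)", symmetric]
      add_row_mult[of i j "- q" "add_row i j _ (mat 1)", symmetric]
    using assms by (simp_all add: vec_eq_iff mat_def)
  then have "unimodular (add_row i j q (mat 1))" by (auto simp: unimodular_def)
  then show ?thesis
    unfolding unimodular_equiv_def by (metis add_row_mult unimodular_1 matrix_mul_rid)
qed

lemma unimodular_equiv_swap_rows: "unimodular_equiv M (swap_rows i j M)"
proof -
  have "swap_rows i j (mat 1) ** swap_rows i j (mat 1) = (mat 1 :: int^'a^'a)"
    unfolding swap_rows_mult[of i j "swap_rows i j (mat 1)", symmetric]
    by (simp add: vec_eq_iff mat_def)
  then have "unimodular (swap_rows i j (mat 1) :: int^'a^'a)" by (auto simp: unimodular_def)
  then show ?thesis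
    unfolding unimodular_equiv_def by (metis swap_rows_mult unimodular_1 matrix_mul_rid)
qed

text \<open>For a pivot \<open>i \<notin> D\<close>
  the Euclidean algorithm decreases \<open>|M\<^sub>i\<^sub>i|\<close>, and for fixed pivot the number of nonzero
  off-diagonal entries in row and column \<open>i\<close> outside \<open>D\<close>.\<close>
definition diag_on :: "'n set \<Rightarrow> int^'n^'n \<Rightarrow> bool" where
  "diag_on D M \<longleftrightarrow> (\<forall>i j. i \<noteq> j \<and> (i \<in> D \<or> j \<in> D) \<longrightarrow> M $ i $ j = 0)"

definition col_support :: "'n set \<Rightarrow> 'n \<Rightarrow> int^'n^'n \<Rightarrow> 'n set" where
  "col_support D i M = {r. r \<notin> D \<and> r \<noteq> i \<and> M $ r $ i \<noteq> 0}"

definition pivot_weight :: "'n::finite set \<Rightarrow> 'n \<Rightarrow> int^'n^'n \<Rightarrow> nat" where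
  "pivot_weight D i M = card (col_support D i M) + card (col_support D i (transpose M))"

definition pivot_order :: "'n::finite set \<Rightarrow> 'n \<Rightarrow> (int^'n^'n) rel" where
  "pivot_order D i = measures [\<lambda>M. nat \<bar>M $ i $ i\<bar>, pivot_weight D i]"

lemma transpose_nth [simp]: "transpose A $ i $ j = A $ j $ i"
  by (simp add: transpose_def)

lemma diag_on_transpose: "diag_on D (transpose M) \<longleftrightarrow> diag_on D M"
  unfolding diag_on_def by auto

lemma pivot_weight_transpose: "pivot_weight D i (transpose M) = pivot_weight D i M"
  by (simp add: pivot_weight_def)

lemma diag_on_add_row:
  assumes "diag_on D M" "i \<notin> D" "j \<notin> D"
  shows "diag_on D (add_row i j q M)"
proof -
  have "M $ i $ y = 0 \<and> M $ j $ y = 0" if "y \<in> D" for y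
    using assms that by (simp add: diag_on_def) (metis)
  then show ?thesis using assms by (auto simp: diag_on_def)
qed

lemma diag_on_swap_rows:
  assumes "diag_on D M" "i \<notin> D" "j \<notin> D"
  shows "diag_on D (swap_rows i j M)"
proof -
  have "M $ Transposition.transpose i j x $ y = 0" if "x \<noteq> y" "x \<in> D \<or> y \<in> D" for x y
  proof (cases "x \<in> D")
    case True
    then have "Transposition.transpose i j x = x"
      using assms(2,3) by (intro transpose_apply_other) auto
    then show ?thesis using assms(1) that by (simp add: diag_on_def)
  next
    case False
    then have "Transposition.transpose i j x \<notin> D"
      using assms(2,3) by (auto simp: Transposition.transpose_def)
    moreover have "y \<in> D" using that False by blast
    ultimately have "Transposition.transpose i j x \<noteq> y" by blast
    then show ?thesis using assms(1) \<open>y \<in> D\<close> by (simp add: diag_on_def)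
  qed
  then show ?thesis by (simp add: diag_on_def)
qed

lemma diag_on_insert:
  assumes "diag_on D M" "pivot_weight D i M = 0"
  shows "diag_on (insert i D) M"
  using assms by (auto simp: diag_on_def pivot_weight_def col_support_def)

text \<open>One Euclidean step on an entry below the pivot: reduce it modulo the pivot and,
  if a nonzero remainder is left, swap it into the pivot position.\<close>
lemma reduce_column_entry:
  assumes D: "diag_on D M" and i: "i \<notin> D" and piv: "M $ i $ i \<noteq> 0"
    and r: "r \<in> col_support D i M"
  shows "\<exists>N. unimodular_equiv M N \<and> diag_on D N \<and> N $ i $ i \<noteq> 0
    \<and> (N, M) \<in> pivot_order D i"
proof -
  have rD: "r \<notin> D" and ri: "r \<noteq> i" using r by (auto simp: col_support_def)
  define M1 where "M1 = add_row r i (- (M $ r $ i div M $ i $ i)) M"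
  have M1: "unimodular_equiv M M1" "diag_on D M1" "M1 $ i $ i = M $ i $ i"
    using unimodular_equiv_add_row[OF ri] diag_on_add_row[OF D rD i] ri by (simp_all add: M1_def)
  have rem: "M1 $ r $ i = M $ r $ i mod M $ i $ i"
    by (simp add: M1_def minus_div_mult_eq_mod[symmetric] algebra_simps)
  show ?thesis
  proof (cases "M1 $ r $ i = 0")
    case True
    have "col_support D i M1 = col_support D i M - {r}"
      "col_support D i (transpose M1) = col_support D i (transpose M)"
      using True ri by (auto simp: M1_def col_support_def)
    moreover have "card (col_support D i M - {r}) < card (col_support D i M)"
      using r by (intro card_Diff1_less) auto
    ultimately have "pivot_weight D i M1 < pivot_weight D i M"
      by (simp add: pivot_weight_def)
    then show ?thesis using M1 piv by (auto simp: pivot_order_def)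
  next
    case False
    define N where "N = swap_rows i r M1"
    have "nat \<bar>N $ i $ i\<bar> < nat \<bar>M $ i $ i\<bar>"
      using abs_mod_less[OF piv] piv by (simp add: N_def rem)
    moreover have "unimodular_equiv M N" "diag_on D N" "N $ i $ i = M1 $ r $ i"
      using M1 unimodular_equiv_trans[OF _ unimodular_equiv_swap_rows] diag_on_swap_rows[OF _ i rD]
      by (simp_all add: N_def)
    ultimately show ?thesis using False by (auto simp: pivot_order_def)
  qed
qed

text \<open>By transposition the same step also applies to entries right of the pivot.\<close>
lemma reduce_pivot_cross:
  assumes D: "diag_on D M" and i: "i \<notin> D" and piv: "M $ i $ i \<noteq> 0"
    and w: "pivot_weight D i M \<noteq> 0"
  shows "\<exists>N. unimodular_equiv M N \<and> diag_on D N \<and> N $ i $ i \<noteq> 0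
    \<and> (N, M) \<in> pivot_order D i"
proof (cases "col_support D i M = {}")
  case False
  then show ?thesis using reduce_column_entry[OF D i piv] by blast
next
  case True
  then obtain c where "c \<in> col_support D i (transpose M)"
    using w by (auto simp: pivot_weight_def)
  moreover have "diag_on D (transpose M)" "transpose M $ i $ i \<noteq> 0"
    using D piv by (simp_all add: diag_on_transpose)
  ultimately obtain N where N: "unimodular_equiv (transpose M) N" "diag_on D N" "N $ i $ i \<noteq> 0"
      "(N, transpose M) \<in> pivot_order D i"
    using reduce_column_entry[of D "transpose M" i c] i by blast
  then show ?thesis
    using unimodular_equiv_transpose[OF N(1)]
    by (intro exI[of _ "transpose N"])
      (auto simp: diag_on_transpose pivot_order_def pivot_weight_transpose)
qed

lemma clear_pivot:
  assumes "diag_on D M" "i \<notin> D" "M $ i $ i \<noteq> 0"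
  shows "\<exists>N. unimodular_equiv M N \<and> diag_on (insert i D) N"
proof -
  have "wf (pivot_order D i)" by (simp add: pivot_order_def)
  then show ?thesis using assms
  proof (induction M rule: wf_induct_rule)
    case (less M)
    show ?case
    proof (cases "pivot_weight D i M = 0")
      case True
      then show ?thesis using less.prems(1) diag_on_insert unimodular_equiv_refl by blast
    next
      case False
      then obtain N where "unimodular_equiv M N" "diag_on D N" "N $ i $ i \<noteq> 0"
        "(N, M) \<in> pivot_order D i"
        using reduce_pivot_cross less.prems by blast
      then show ?thesis using less.IH less.prems(2) unimodular_equiv_trans by blast
    qed
  qed
qed

text \<open>A zero pivot is first replaced by a nonzero entry of its row or column (if any).\<close>
lemma extend_diag_on:
  assumes D: "diag_on D M" and i: "i \<notin> D"
  shows "\<exists>N. unimodular_equiv M N \<and> diag_on (insert i D) N"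
proof -
  have "\<exists>N. unimodular_equiv M N \<and> diag_on D N \<and> (N $ i $ i \<noteq> 0 \<or> pivot_weight D i N = 0)"
  proof (cases "M $ i $ i \<noteq> 0 \<or> pivot_weight D i M = 0")
    case True
    then show ?thesis using D unimodular_equiv_refl by blast
  next
    case False
    then have w: "pivot_weight D i M \<noteq> 0" by simp
    show ?thesis
    proof (cases "col_support D i M = {}")
      case False
      then obtain r where r: "r \<in> col_support D i M" by blast
      then have "swap_rows i r M $ i $ i \<noteq> 0" "diag_on D (swap_rows i r M)"
        using diag_on_swap_rows[OF D i] by (auto simp: col_support_def)
      then show ?thesis using unimodular_equiv_swap_rows by blast
    next
      case True
      then obtain c where c: "c \<in> col_support D i (transpose M)"
        using w by (auto simp: pivot_weight_def)
      let ?N = "transpose (swap_rows i c (transpose M))"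
      have "?N $ i $ i \<noteq> 0" "diag_on D ?N"
        using c D i diag_on_swap_rows[of D "transpose M" i c]
        by (auto simp: col_support_def diag_on_transpose)
      moreover have "unimodular_equiv M ?N"
        using unimodular_equiv_transpose[OF unimodular_equiv_swap_rows[of "transpose M" i c]]
        by simp
      ultimately show ?thesis by blast
    qed
  qed
  then show ?thesis
    using clear_pivot[OF _ i] diag_on_insert unimodular_equiv_trans by blast
qed

text \<open>Every integer matrix is equivalent to a diagonal one (no divisibility conditions
  on the diagonal are needed here, unlike for the Smith normal form).\<close>
lemma unimodular_equiv_diagonal: "\<exists>N. unimodular_equiv M N \<and> diag_on UNIV N"
proof -
  have "\<exists>N. unimodular_equiv M N \<and> diag_on D N" if "finite D" for D
    using that
  proof (induction D rule: finite_induct)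
    case empty
    then show ?case using unimodular_equiv_refl by (auto simp: diag_on_def)
  next
    case (insert i D)
    then show ?case using extend_diag_on unimodular_equiv_trans by blast
  qed
  then show ?thesis by simp
qed

text \<open>The one-dimensional count: \<open>x \<in> [0,1)\<close> with \<open>d x \<in> \<int>\<close> are the \<open>k / |d|\<close>.\<close>
lemma card_frac_multiples:
  fixes d :: int
  assumes "d \<noteq> 0"
  shows "card {x::real. 0 \<le> x \<and> x < 1 \<and> of_int d * x \<in> \<int>} = nat \<bar>d\<bar>"
proof -
  let ?a = "real_of_int \<bar>d\<bar>"
  have a: "?a > 0" using assms by simp
  have ints: "of_int d * x \<in> \<int> \<longleftrightarrow> ?a * x \<in> \<int>" for x :: real
  proof (cases "d \<ge> 0")
    case False
    then have "?a * x = - (of_int d * x)" by simp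
    then show ?thesis by (simp only: minus_in_Ints_iff)
  qed simp
  have "{x::real. 0 \<le> x \<and> x < 1 \<and> of_int d * x \<in> \<int>} = (\<lambda>k. of_int k / ?a) ` {0..<\<bar>d\<bar>}"
  proof (intro equalityI subsetI)
    fix x assume "x \<in> {x::real. 0 \<le> x \<and> x < 1 \<and> of_int d * x \<in> \<int>}"
    then obtain k where k: "?a * x = of_int k" and x: "0 \<le> x" "x < 1"
      by (auto simp: ints elim!: Ints_cases)
    have "0 \<le> ?a * x" "?a * x < ?a" using x a by auto
    then have "k \<in> {0..<\<bar>d\<bar>}" unfolding k by simp
    moreover have "x = of_int k / ?a" using k a by (simp add: field_simps)
    ultimately show "x \<in> (\<lambda>k. of_int k / ?a) ` {0..<\<bar>d\<bar>}" by blast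
  next
    fix x assume "x \<in> (\<lambda>k. of_int k / ?a) ` {0..<\<bar>d\<bar>}"
    then obtain k where "0 \<le> k" "k < \<bar>d\<bar>" "x = of_int k / ?a" by auto
    then show "x \<in> {x::real. 0 \<le> x \<and> x < 1 \<and> of_int d * x \<in> \<int>}"
      using a by (simp add: ints)
  qed
  moreover have "inj_on (\<lambda>k. of_int k / ?a) {0..<\<bar>d\<bar>}"
    using a by (auto simp: inj_on_def)
  ultimately show ?thesis by (simp add: card_image)
qed

lemma card_vec_box: "card {x::'a^'n::finite. \<forall>i. x $ i \<in> A i} = (\<Prod>i\<in>UNIV. card (A i))"
proof -
  have "bij_betw vec_lambda (PiE UNIV A) {x::'a^'n. \<forall>i. x $ i \<in> A i}"
    by (rule bij_betw_byWitness[where f' = vec_nth]) (auto simp: fun_eq_iff)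
  then show ?thesis using bij_betw_same_card card_PiE[of UNIV A] by fastforce
qed

lemma card_frac_points_diagonal:
  assumes diag: "diag_on UNIV M" and det: "det M \<noteq> 0"
  shows "card (frac_points M) = nat \<bar>det M\<bar>"
proof -
  have off: "i \<noteq> j \<Longrightarrow> M $ i $ j = 0" for i j using diag by (simp add: diag_on_def)
  have det_eq: "det M = (\<Prod>i\<in>UNIV. M $ i $ i)" by (simp add: det_diagonal off)
  then have nz: "M $ i $ i \<noteq> 0" for i using det by auto
  have mult: "(of_int_mat M *v x) $ i = of_int (M $ i $ i) * x $ i" for x i
  proof -
    have "(\<Sum>j\<in>UNIV. of_int (M $ i $ j) * x $ j) = (\<Sum>j\<in>{i}. of_int (M $ i $ j) * x $ j)"
      by (rule sum.mono_neutral_right) (auto simp: off)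
    then show ?thesis by (simp add: matrix_vector_mult_def of_int_mat_def)
  qed
  have B: "frac_points M = {x. \<forall>i. x $ i \<in> {y. 0 \<le> y \<and> y < 1 \<and> of_int (M $ i $ i) * y \<in> \<int>}}"
    by (auto simp: frac_points_def unit_box_def int_vec_def mult)
  have "card (frac_points M) = (\<Prod>i\<in>UNIV. nat \<bar>M $ i $ i\<bar>)"
    unfolding B card_vec_box using card_frac_multiples[OF nz] by simp
  also have "\<dots> = nat \<bar>det M\<bar>"
  proof -
    have "int (\<Prod>i\<in>UNIV. nat \<bar>M $ i $ i\<bar>) = \<bar>det M\<bar>" by (simp add: det_eq abs_prod)
    then show ?thesis by linarith
  qed
  finally show ?thesis .
qed

theorem card_frac_points:
  assumes "det M \<noteq> 0"
  shows "card (frac_points M) = nat \<bar>det M\<bar>"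
proof -
  obtain N where N: "unimodular_equiv M N" "diag_on UNIV N" using unimodular_equiv_diagonal by blast
  have det: "\<bar>det N\<bar> = \<bar>det M\<bar>" by (rule unimodular_equiv_abs_det[OF N(1)])
  then have "det N \<noteq> 0" using assms by auto
  then show ?thesis
    using card_frac_points_diagonal[OF N(2)] det unimodular_equiv_card_frac_points[OF N(1)] by simp
qed

section \<open>Determinants and characteristic polynomials\<close>

lemma det_ring_hom:
  fixes f :: "'a::comm_ring_1 \<Rightarrow> 'b::comm_ring_1"
  assumes add: "\<And>a b. f (a + b) = f a + f b" and mult: "\<And>a b. f (a * b) = f a * f b"
    and zero: "f 0 = 0" and one: "f 1 = 1" and uminus: "\<And>a. f (- a) = - f a"
  shows "f (det A) = det (\<chi> i j. f (A $ i $ j) :: 'b^'n::finite^'n)"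
proof -
  have sum: "f (sum g S) = (\<Sum>x\<in>S. f (g x))" for g :: "_ \<Rightarrow> 'a" and S
    using sum_comp_morphism[of f g S, OF zero add] by (simp add: o_def)
  have prod: "f (prod g S) = (\<Prod>x\<in>S. f (g x))" for g :: "_ \<Rightarrow> 'a" and S
    by (induction S rule: infinite_finite_induct) (simp_all add: one mult)
  have "f (of_int (sign p)) = of_int (sign p)" for p :: "'n \<Rightarrow> 'n"
    by (simp add: sign_def one uminus)
  then show ?thesis unfolding det_def by (simp add: sum mult prod)
qed

lemma abs_det_uminus: "\<bar>det (- A)\<bar> = \<bar>det (A :: 'a::linordered_idom^'n::finite^'n)\<bar>"
proof -
  have "- A = (\<chi> i. (- 1) *s A $ i)" by (simp add: vec_eq_iff)
  then show ?thesis by (simp add: det_rows_mul abs_mult)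
qed

lemma det_nz_iff_kernel:
  fixes A :: "'a::field^'n::finite^'n"
  shows "det A \<noteq> 0 \<longleftrightarrow> (\<forall>x. A *v x = 0 \<longrightarrow> x = 0)"
  using invertible_det_nz[of A] invertible_left_inverse[of A] matrix_left_invertible_ker[of A]
  by simp

definition replace_row :: "'n \<Rightarrow> 'a^'n \<Rightarrow> 'a^'n^'n \<Rightarrow> 'a^'n::finite^'n" where
  "replace_row k v A = (\<chi> i. if i = k then v else A $ i)"

lemma det_add_all_rows:
  fixes A :: "'a::field^'n::finite^'n"
  shows "det (replace_row k (\<Sum>i\<in>UNIV. A $ i) A) = det A"
proof -
  have "(\<Sum>i\<in>UNIV - {k}. row i A) \<in> vec.span {row j A |j. j \<noteq> k}"
    by (intro vec.span_sum vec.span_base) auto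
  from det_row_span[OF this]
  show ?thesis
    by (simp add: replace_row_def sum.remove[of UNIV k] row_def[abs_def] add.commute
        cong: if_cong)
qed

lemma det_const_col_sums:
  fixes A :: "'a::field^'n::finite^'n"
  assumes "\<And>j. (\<Sum>i\<in>UNIV. A $ i $ j) = s"
  shows "det A = s * det (replace_row k 1 A)"
proof -
  have "(\<Sum>i\<in>UNIV. A $ i) = s *s 1"
    using assms by (simp add: vec_eq_iff sum_component)
  then show ?thesis
    using det_add_all_rows[of k A] det_row_mul[of k s "\<lambda>_. 1" "\<lambda>i. A $ i"]
    by (simp add: replace_row_def)
qed

lemma det_add_row_to_others:
  fixes A :: "'a::comm_ring_1^'n::finite^'n"
  shows "det (\<chi> i. if i = k then A $ k else A $ i + c i *s A $ k) = det A"
proof -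
  have partial: "det (\<chi> i. if i \<in> S \<and> i \<noteq> k then A $ i + c i *s A $ k else A $ i) = det A"
    if "finite S" for S
    using that
  proof (induction S rule: finite_induct)
    case (insert j S)
    let ?B = "\<chi> i. if i \<in> S \<and> i \<noteq> k then A $ i + c i *s A $ k else A $ i"
    show ?case
    proof (cases "j = k")
      case True
      then have "(i \<in> insert j S \<and> i \<noteq> k) \<longleftrightarrow> (i \<in> S \<and> i \<noteq> k)" for i by auto
      then show ?thesis using insert.IH by (simp only:)
    next
      case False
      have "(\<chi> i. if i \<in> insert j S \<and> i \<noteq> k then A $ i + c i *s A $ k else A $ i)
          = (\<chi> i. if i = j then row j ?B + c j *s row k ?B else row i ?B)"
        using False insert(2) by (auto simp: vec_eq_iff row_def)
      then show ?thesis using det_row_operation[OF False, of ?B] insert by simp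
    qed
  qed simp
  have "(\<chi> i. if i = k then A $ k else A $ i + c i *s A $ k)
      = (\<chi> i. if i \<in> UNIV \<and> i \<noteq> k then A $ i + c i *s A $ k else A $ i)"
    by (simp add: vec_eq_iff)
  then show ?thesis using partial[OF finite[of UNIV]] by (simp only:)
qed

lemma poly_charpoly: "poly (charpoly A) x = det (mat x - A)"
proof -
  have eq: "mat x - A = (\<chi> i j. poly ((if i = j then [:0, 1:] else 0) - [:A $ i $ j:]) x)"
    by (simp add: vec_eq_iff mat_def)
  show ?thesis unfolding charpoly_def eq
    using det_ring_hom[of "\<lambda>p. poly p x" "\<chi> i j. (if i = j then [:0, 1:] else 0) - [:A $ i $ j:]"]
    by simp
qed

lemma map_poly_of_real_add: "map_poly of_real (p + q) = map_poly of_real p + map_poly of_real q"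
  and map_poly_of_real_mult: "map_poly of_real (p * q) = map_poly of_real p * map_poly of_real q"
  and map_poly_of_real_uminus: "map_poly of_real (- p) = - map_poly of_real p"
  for p q :: "real poly"
  by (simp_all add: poly_eq_iff coeff_map_poly coeff_mult of_real_sum)

lemma poly_charpoly_complex:
  "poly (map_poly of_real (charpoly A)) z = det (mat z - (\<chi> i j. of_real (A $ i $ j)))"
proof -
  have eq: "mat z - (\<chi> i j. of_real (A $ i $ j))
      = (\<chi> i j. poly (map_poly of_real ((if i = j then [:0, 1:] else 0) - [:A $ i $ j:])) z)"
    by (simp add: vec_eq_iff mat_def map_poly_pCons)
  show ?thesis unfolding charpoly_def eq
    using det_ring_hom[of "\<lambda>p. poly (map_poly of_real p) z"
        "\<chi> i j. (if i = j then [:0, 1:] else 0) - [:A $ i $ j:]"]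
    by (simp add: map_poly_of_real_add map_poly_of_real_mult map_poly_of_real_uminus)
qed

lemma mat_mult_vec: "mat c *v x = c *s (x :: 'a::comm_semiring_1^'n::finite)"
proof -
  have "(\<Sum>j\<in>UNIV. (if i = j then c else 0) * x $ j) = (\<Sum>j\<in>UNIV. if i = j then c * x $ j else 0)"
    for i by (rule sum.cong) simp_all
  then have "(mat c *v x) $ i = (\<Sum>j\<in>UNIV. if i = j then c * x $ j else 0)" for i
    by (simp add: matrix_vector_mult_def mat_def)
  then show ?thesis by (simp add: vec_eq_iff)
qed

lemma charpoly_root_eigenvector:
  fixes A :: "'a::field^'n::finite^'n"
  assumes "det (mat x - A) = 0"
  obtains w where "w \<noteq> 0" "A *v w = x *s w"
proof -
  obtain w where "w \<noteq> 0" "(mat x - A) *v w = 0"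
    using assms det_nz_iff_kernel[of "mat x - A"] by blast
  then show ?thesis
    using that by (simp add: matrix_vector_mult_diff_rdistrib mat_mult_vec)
qed

text \<open>Real symmetric matrices have only real eigenvalues: for an eigenvector \<open>w\<close> the
  number \<open>w\<^sup>* A w = z |w|\<^sup>2\<close> equals its own conjugate.\<close>
lemma charpoly_roots_real_symmetric:
  fixes A :: "real^'n::finite^'n" and z :: complex
  assumes sym: "\<And>i j. A $ i $ j = A $ j $ i"
    and root: "poly (map_poly of_real (charpoly A)) z = 0"
  shows "z \<in> \<real>"
proof -
  define B :: "complex^'n^'n" where "B = (\<chi> i j. of_real (A $ i $ j))"
  obtain w where w: "w \<noteq> 0" "B *v w = z *s w"
    using root charpoly_root_eigenvector[of z B] by (auto simp: poly_charpoly_complex B_def)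
  define s where "s = (\<Sum>i\<in>UNIV. cnj (w $ i) * (B *v w) $ i)"
  define N where "N = (\<Sum>i\<in>UNIV. (cmod (w $ i))\<^sup>2)"
  have "of_real N = (\<Sum>i\<in>UNIV. cnj (w $ i) * w $ i)"
    unfolding N_def of_real_sum complex_norm_square by (simp add: mult.commute)
  then have sN: "s = z * of_real N"
    by (simp add: s_def w(2) sum_distrib_left mult.left_commute)
  have expand: "s = (\<Sum>i\<in>UNIV. \<Sum>j\<in>UNIV. cnj (w $ i) * (of_real (A $ i $ j) * w $ j))"
    by (simp add: s_def B_def matrix_vector_mult_def sum_distrib_left)
  have "cnj s = (\<Sum>i\<in>UNIV. \<Sum>j\<in>UNIV. w $ i * (of_real (A $ i $ j) * cnj (w $ j)))"
    by (simp add: expand)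
  also have "\<dots> = (\<Sum>j\<in>UNIV. \<Sum>i\<in>UNIV. w $ i * (of_real (A $ i $ j) * cnj (w $ j)))"
    by (rule sum.swap)
  also have "\<dots> = s"
    unfolding expand by (intro sum.cong refl) (simp add: sym mult_ac)
  finally have "cnj s = s" .
  moreover have "N > 0"
  proof -
    obtain i where "w $ i \<noteq> 0" using w(1) by (auto simp: vec_eq_iff)
    then show ?thesis unfolding N_def by (intro sum_pos2[of _ i]) auto
  qed
  ultimately have "cnj z = z" using sN by (simp add: complex_eq_iff)
  then show ?thesis using Reals_cnj_iff by blast
qed

lemma charpoly_roots_nonneg_psd:
  fixes A :: "real^'n::finite^'n"
  assumes psd: "\<And>x. 0 \<le> x \<bullet> (A *v x)" and root: "poly (charpoly A) r = 0"
  shows "0 \<le> r"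
proof -
  obtain w where w: "w \<noteq> 0" "A *v w = r *s w"
    using root charpoly_root_eigenvector[of r A] by (auto simp: poly_charpoly)
  have "0 \<le> r * (w \<bullet> w)" using psd[of w] by (simp add: w(2) scalar_mult_eq_scaleR)
  moreover have "0 < w \<bullet> w" using w(1) by simp
  ultimately show ?thesis by (simp add: zero_le_mult_iff)
qed

lemma poly_0_real_rooted:
  fixes p :: "real poly"
  assumes "p \<noteq> 0" "\<And>z. poly (map_poly complex_of_real p) z = 0 \<Longrightarrow> z \<in> \<real>"
  shows "poly p 0 = lead_coeff p * (- 1) ^ degree p * prod_mset (proots p)"
  using assms
proof (induction "degree p" arbitrary: p)
  case 0
  then obtain c where "p = [:c:]" by (metis degree_0_id)
  then show ?case using 0 by simp
next
  case (Suc n p)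
  have "degree (map_poly complex_of_real p) = Suc n"
    using Suc.hyps(2) by (simp add: degree_map_poly)
  then obtain z where z: "poly (map_poly complex_of_real p) z = 0"
    using fundamental_theorem_of_algebra constant_degree by (metis nat.simps(3))
  then obtain r where "z = of_real r" using Suc.prems(2) by (auto elim: Reals_cases)
  moreover have "poly (map_poly complex_of_real p) (of_real r) = of_real (poly p r)"
    by (induction p) (auto simp: map_poly_pCons)
  ultimately have "poly p r = 0" using z by simp
  then obtain q where p: "p = [:- r, 1:] * q" using poly_eq_0_iff_dvd by (metis dvdE)
  have q: "q \<noteq> 0" using p Suc.prems(1) by auto
  have "degree q = n"
    using Suc.hyps(2) q unfolding p by (subst (asm) degree_mult_eq) auto
  moreover have "poly (map_poly complex_of_real q) w = 0 \<Longrightarrow> w \<in> \<real>" for w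
    using Suc.prems(2)[of w] by (simp add: p map_poly_of_real_mult del: mult_pCons_left)
  ultimately have IH: "poly q 0 = lead_coeff q * (- 1) ^ n * prod_mset (proots q)"
    using Suc.hyps(1) q by blast
  have roots: "prod_mset (proots p) = r * prod_mset (proots q)"
    using q proots_mult[of "[:- r, 1:]" q] unfolding p by simp
  have lead: "lead_coeff p = lead_coeff q"
    unfolding p lead_coeff_mult by simp
  have "poly p 0 = - r * poly q 0"
    unfolding p by simp
  also have "\<dots> = lead_coeff p * (- 1) ^ Suc n * prod_mset (proots p)"
    unfolding IH lead roots by simp
  finally show ?case by (simp only: Suc.hyps(2))
qed

lemma degree_leibniz_term_le:
  fixes P :: "'a::comm_ring_1 poly^'n::finite^'n"
  assumes deg_le: "\<And>i j. degree (P $ i $ j) \<le> (if i = j then 1 else 0)" and i: "p i \<noteq> i"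
  shows "degree (\<Prod>l\<in>UNIV. P $ l $ p l) \<le> CARD('n) - 1"
proof -
  have "degree (\<Prod>l\<in>UNIV. P $ l $ p l) \<le> (\<Sum>l\<in>UNIV. degree (P $ l $ p l))"
    using degree_prod_sum_le[of UNIV "\<lambda>l. P $ l $ p l"] by (simp add: o_def)
  also have "\<dots> = degree (P $ i $ p i) + (\<Sum>l\<in>UNIV - {i}. degree (P $ l $ p l))"
    by (rule sum.remove) auto
  also have "\<dots> \<le> 0 + (\<Sum>l\<in>UNIV - {i}. 1)"
  proof (intro add_mono sum_mono)
    show "degree (P $ i $ p i) \<le> 0" using deg_le[of i "p i"] i by simp
    show "degree (P $ l $ p l) \<le> 1" for l using deg_le[of l "p l"] by (simp split: if_splits)
  qed
  also have "\<dots> = CARD('n) - 1" by (simp add: card_Diff_singleton)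
  finally show ?thesis .
qed

text \<open>The characteristic polynomial is monic of degree \<open>n\<close>: only the diagonal term of
  the Leibniz expansion reaches degree \<open>n\<close>.\<close>
lemma charpoly_monic:
  fixes A :: "real^'n::finite^'n"
  shows "degree (charpoly A) = CARD('n)" and "lead_coeff (charpoly A) = 1"
proof -
  define P :: "real poly^'n^'n" where "P = (\<chi> i j. (if i = j then [:0, 1:] else 0) - [:A $ i $ j:])"
  define T where "T p = of_int (sign p) * (\<Prod>i\<in>UNIV. P $ i $ p i)" for p :: "'n \<Rightarrow> 'n"
  let ?PU = "{p. p permutes (UNIV :: 'n set)}"
  have cp: "charpoly A = T id + (\<Sum>p\<in>?PU - {id}. T p)"
    unfolding charpoly_def P_def[symmetric] det_def T_def[symmetric]
    by (rule sum.remove) (auto simp: permutes_id)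
  have T_id: "T id = (\<Prod>i\<in>UNIV. [:- A $ i $ i, 1:])" by (simp add: T_def P_def sign_id)
  have deg_id: "degree (T id) = CARD('n)"
    unfolding T_id by (simp add: degree_prod_eq_sum_degree)
  have lead_id: "lead_coeff (T id) = 1"
    unfolding T_id lead_coeff_prod by simp
  have deg_other: "degree (T p) \<le> CARD('n) - 1" if "p \<in> ?PU - {id}" for p
  proof -
    from that obtain i where "p i \<noteq> i" by (auto simp: fun_eq_iff)
    then have "degree (\<Prod>l\<in>UNIV. P $ l $ p l) \<le> CARD('n) - 1"
      by (intro degree_leibniz_term_le) (simp add: P_def)
    then show ?thesis
      using degree_mult_le[of "of_int (sign p)" "\<Prod>l\<in>UNIV. P $ l $ p l"] by (simp add: T_def)
  qed
  have "degree (\<Sum>p\<in>?PU - {id}. T p) \<le> CARD('n) - 1"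
  proof (rule degree_sum_le)
    show "finite (?PU - {id})" by (simp add: finite_permutations)
  qed (rule deg_other)
  then have rest: "degree (\<Sum>p\<in>?PU - {id}. T p) < CARD('n)"
    using zero_less_card_finite[where 'a = 'n] by linarith
  show deg: "degree (charpoly A) = CARD('n)"
    unfolding cp using rest deg_id by (simp add: degree_add_eq_left)
  show "lead_coeff (charpoly A) = 1"
    using rest deg_id lead_id deg unfolding cp by (simp add: coeff_eq_0)
qed

section \<open>The pseudo-determinant of Laplacian-like matrices\<close>

definition all_ones :: "'a::one^'n^'m" where
  "all_ones = (\<chi> i j. 1)"

definition ground :: "'n \<Rightarrow> 'a::zero_neq_one^'n^'n \<Rightarrow> 'a^'n::finite^'n" where
  "ground k A = (\<chi> i j. if i = k \<or> j = k then (if i = j then 1 else 0) else A $ i $ j)"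

text \<open>Adding the all-ones matrix to a matrix with zero column sums moves one eigenvalue
  from \<open>0\<close> to \<open>n\<close> and leaves the rest of the spectrum unchanged.\<close>
lemma charpoly_add_all_ones:
  fixes A :: "real^'n::finite^'n"
  assumes cols: "\<And>j. (\<Sum>i\<in>UNIV. A $ i $ j) = 0"
  shows "[:0, 1:] * charpoly (A + all_ones) = [:- real CARD('n), 1:] * charpoly A"
proof -
  fix k :: 'n
  have "x * det (mat x - (A + all_ones)) = (x - real CARD('n)) * det (mat x - A)" for x
  proof -
    define R where "R = replace_row k 1 (mat x - A)"
    have "(\<Sum>i\<in>UNIV. (mat x - A) $ i $ j) = x" for j
      using cols[of j] by (simp add: mat_def sum_subtractf)
    then have dA: "det (mat x - A) = x * det R"
      unfolding R_def by (rule det_const_col_sums)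
    have "(\<Sum>i\<in>UNIV. (mat x - (A + all_ones)) $ i $ j) = x - real CARD('n)" for j
      using cols[of j] by (simp add: mat_def all_ones_def sum_subtractf sum.distrib)
    then have "det (mat x - (A + all_ones))
        = (x - real CARD('n)) * det (replace_row k 1 (mat x - (A + all_ones)))"
      by (rule det_const_col_sums)
    also have "replace_row k 1 (mat x - (A + all_ones))
        = (\<chi> i. if i = k then R $ k else R $ i + (- 1) *s R $ k)"
      by (simp add: R_def replace_row_def all_ones_def vec_eq_iff)
    finally show ?thesis using dA det_add_row_to_others[of k R] by simp
  qed
  then show ?thesis
    by (intro poly_eq_poly_eq_iff[THEN iffD1])
      (simp add: fun_eq_iff poly_charpoly left_diff_distrib)
qed

lemma det_add_all_ones:
  fixes A :: "real^'n::finite^'n"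
  assumes rows: "\<And>i. (\<Sum>j\<in>UNIV. A $ i $ j) = 0" and cols: "\<And>j. (\<Sum>i\<in>UNIV. A $ i $ j) = 0"
  shows "det (A + all_ones) = real CARD('n) ^ 2 * det (ground k A)"
proof -
  let ?n = "real CARD('n)"
  define R where "R = replace_row k 1 A"
  have "(\<Sum>i\<in>UNIV. (A + all_ones) $ i $ j) = ?n" for j
    using cols[of j] by (simp add: all_ones_def sum.distrib)
  then have "det (A + all_ones) = ?n * det (replace_row k 1 (A + all_ones))"
    by (rule det_const_col_sums)
  also have "replace_row k 1 (A + all_ones) = (\<chi> i. if i = k then R $ k else R $ i + 1 *s R $ k)"
    by (simp add: R_def replace_row_def all_ones_def vec_eq_iff)
  also have "det \<dots> = det (transpose R)"
    using det_add_row_to_others[of k R "\<lambda>_. 1"] by simp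
  also have "\<dots> = det (replace_row k (\<Sum>i\<in>UNIV. transpose R $ i) (transpose R))"
    by (rule det_add_all_rows[symmetric])
  also have "(\<Sum>i\<in>UNIV. transpose R $ i) = ?n *s axis k 1"
    using rows by (simp add: vec_eq_iff sum_component R_def replace_row_def transpose_def axis_def)
  also have "det (replace_row k (?n *s axis k 1) (transpose R))
      = ?n * det (replace_row k (axis k 1) (transpose R))"
    unfolding replace_row_def by (rule det_row_mul)
  also have "replace_row k (axis k 1) (transpose R)
      = (\<chi> i. if i = k then transpose (ground k A) $ k
             else transpose (ground k A) $ i + 1 *s transpose (ground k A) $ k)"
    by (auto simp: vec_eq_iff R_def replace_row_def ground_def transpose_def axis_def)
  also have "det \<dots> = det (ground k A)"
    using det_add_row_to_others[of k "transpose (ground k A)" "\<lambda>_. 1"] by simp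
  finally show ?thesis by (simp add: power2_eq_square)
qed

text \<open>With zero row sums, \<open>0\<close> is an eigenvalue (eigenvector \<open>(1,\<dots>,1)\<close>), so the
  characteristic polynomial is divisible by \<open>t\<close>.\<close>
lemma charpoly_zero_row_sums:
  fixes A :: "real^'n::finite^'n"
  assumes rows: "\<And>i. (\<Sum>j\<in>UNIV. A $ i $ j) = 0"
  obtains q where "charpoly A = [:0, 1:] * q"
proof -
  have "(mat 0 - A) *v 1 = 0"
    using rows by (simp add: vec_eq_iff matrix_vector_mult_def sum_negf)
  then have "poly (charpoly A) 0 = 0"
    unfolding poly_charpoly using det_nz_iff_kernel[of "mat 0 - A"] by auto
  then show ?thesis using that by (metis dvdE minus_zero poly_eq_0_iff_dvd)
qed

text \<open>Writing \<open>det (t - A) = t q(t)\<close>, the value \<open>q(0)\<close> is read off from \<open>det (A + J)\<close>.\<close>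
lemma reduced_charpoly_at_0:
  fixes A :: "real^'n::finite^'n"
  assumes rows: "\<And>i. (\<Sum>j\<in>UNIV. A $ i $ j) = 0" and cols: "\<And>j. (\<Sum>i\<in>UNIV. A $ i $ j) = 0"
    and cp: "charpoly A = [:0, 1:] * q"
  shows "\<bar>poly q 0\<bar> = real CARD('n) * \<bar>det (ground k A)\<bar>"
proof -
  let ?n = "real CARD('n)"
  have "[:0, 1:] * charpoly (A + all_ones) = [:0, 1:] * ([:- ?n, 1:] * q)"
    using charpoly_add_all_ones[OF cols] by (simp add: cp ac_simps)
  then have "charpoly (A + all_ones) = [:- ?n, 1:] * q" by simp
  then have "poly (charpoly (A + all_ones)) 0 = - ?n * poly q 0" by simp
  then have "det (mat 0 - (A + all_ones)) = - ?n * poly q 0"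
    by (simp only: poly_charpoly)
  moreover have "\<bar>det (mat 0 - (A + all_ones))\<bar> = \<bar>det (A + all_ones)\<bar>"
    using abs_det_uminus[of "A + all_ones"] by simp
  moreover have "det (A + all_ones) = ?n ^ 2 * det (ground k A)"
    by (rule det_add_all_ones[OF rows cols])
  ultimately have "?n * \<bar>poly q 0\<bar> = ?n ^ 2 * \<bar>det (ground k A)\<bar>"
    by (simp add: abs_mult)
  then show ?thesis by (simp add: power2_eq_square)
qed

lemma prod_mset_nonneg: "(\<And>x. x \<in># M \<Longrightarrow> (0::'a::linordered_semidom) \<le> x) \<Longrightarrow> 0 \<le> prod_mset M"
  by (induction M) auto

text \<open>If \<open>0\<close> is a simple eigenvalue of a positive semidefinite symmetric matrix, i.e.
  \<open>det (t - A) = t q(t)\<close> with \<open>q(0) \<noteq> 0\<close>, then the product of the nonzero eigenvalues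
  is \<open>|q(0)|\<close>: the eigenvalues are real and nonnegative, and \<open>q\<close> is monic.\<close>
lemma det_star_simple_zero:
  fixes A :: "real^'n::finite^'n"
  assumes sym: "\<And>i j. A $ i $ j = A $ j $ i" and psd: "\<And>x. 0 \<le> x \<bullet> (A *v x)"
    and cp: "charpoly A = [:0, 1:] * q" and q0: "poly q 0 \<noteq> 0"
  shows "det_star A = \<bar>poly q 0\<bar>"
proof -
  have q: "q \<noteq> 0" using q0 by auto
  have roots: "e \<in># proots q \<longleftrightarrow> poly (charpoly A) e = 0 \<and> e \<noteq> 0" for e
    using q q0 by (auto simp: cp)
  have "lead_coeff q = 1"
    using charpoly_monic(2)[of A] unfolding cp lead_coeff_mult by simp
  moreover have "z \<in> \<real>" if "poly (map_poly complex_of_real q) z = 0" for z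
    using that charpoly_roots_real_symmetric[OF sym, of z] unfolding cp map_poly_of_real_mult
    by simp
  ultimately have "\<bar>poly q 0\<bar> = \<bar>prod_mset (proots q)\<bar>"
    using poly_0_real_rooted[OF q] by (simp add: abs_mult)
  also have "\<dots> = prod_mset (proots q)"
    using roots charpoly_roots_nonneg_psd[OF psd] by (intro abs_of_nonneg prod_mset_nonneg) blast
  also have "\<dots> = det_star A"
  proof -
    have "filter_mset (\<lambda>e. e \<noteq> 0) (proots q) = proots q"
      using roots by (auto simp: filter_mset_eq_conv)
    moreover have "proots (charpoly A) = {#0#} + proots q"
      unfolding cp using q proots_mult[of "[:0, 1:]" q] by simp
    ultimately show ?thesis by (simp add: det_star_def)
  qed
  finally show ?thesis by simp
qed

theorem det_star_ground:
  fixes A :: "real^'n::finite^'n"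
  assumes sym: "\<And>i j. A $ i $ j = A $ j $ i" and rows: "\<And>i. (\<Sum>j\<in>UNIV. A $ i $ j) = 0"
    and psd: "\<And>x. 0 \<le> x \<bullet> (A *v x)" and nonsingular: "det (ground k A) \<noteq> 0"
  shows "det_star A = real CARD('n) * \<bar>det (ground k A)\<bar>"
proof -
  have cols: "(\<Sum>i\<in>UNIV. A $ i $ j) = 0" for j using rows[of j] by (simp add: sym)
  obtain q where cp: "charpoly A = [:0, 1:] * q" using charpoly_zero_row_sums[OF rows] .
  have q0: "\<bar>poly q 0\<bar> = real CARD('n) * \<bar>det (ground k A)\<bar>"
    by (rule reduced_charpoly_at_0[OF rows cols cp])
  then have "poly q 0 \<noteq> 0" using nonsingular by auto
  then show ?thesis using det_star_simple_zero[OF sym psd cp] q0 by simp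
qed

section \<open>Topology of the torus\<close>

lemma components_finite_disjoint_Union:
  fixes \<C> :: "'a::metric_space set set"
  assumes fin: "finite \<C>" and sets: "\<And>C. C \<in> \<C> \<Longrightarrow> compact C \<and> connected C \<and> C \<noteq> {}"
    and disj: "pairwise disjnt \<C>"
  shows "components (\<Union>\<C>) = \<C>"
proof -
  have comp: "connected_component_set (\<Union>\<C>) x = C" if C: "C \<in> \<C>" and x: "x \<in> C" for C x
  proof
    show "C \<subseteq> connected_component_set (\<Union>\<C>) x"
      using C x sets by (intro connected_component_maximal) auto
    let ?K = "connected_component_set (\<Union>\<C>) x"
    let ?F = "\<Union>(\<C> - {C})"
    have "closed C" "closed ?F"
      using fin sets C by (auto intro!: closed_Union compact_imp_closed)
    moreover have "?K \<subseteq> C \<union> ?F" "C \<inter> ?F \<inter> ?K = {}"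
      using connected_component_subset[of "\<Union>\<C>" x] disj C
      by (auto simp: pairwise_def disjnt_def)
    moreover have "x \<in> ?K" using x C by (simp add: connected_component_refl_eq) blast
    then have "C \<inter> ?K \<noteq> {}" using x by blast
    ultimately have "?F \<inter> ?K = {}"
      using connected_connected_component[of "\<Union>\<C>" x] unfolding connected_closed by blast
    then show "?K \<subseteq> C"
      using connected_component_subset[of "\<Union>\<C>" x] by blast
  qed
  show ?thesis
  proof (intro equalityI subsetI)
    fix K assume "K \<in> components (\<Union>\<C>)"
    then obtain C x where "C \<in> \<C>" "x \<in> C" "K = connected_component_set (\<Union>\<C>) x"
      by (auto simp: components_iff)
    then show "K \<in> \<C>" using comp by simp
  next
    fix C assume C: "C \<in> \<C>"
    then obtain x where "x \<in> C" using sets by blast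
    then show "C \<in> components (\<Union>\<C>)"
      using comp[OF C] C componentsI[of x "\<Union>\<C>"] by auto
  qed
qed

lemma cis_2pi_eq_1_iff: "cis (2 * pi * a) = 1 \<longleftrightarrow> a \<in> \<int>"
proof -
  have "cis (2 * pi * a) = 1 \<longleftrightarrow> cos (2 * pi * a) = 1"
    by (auto simp: complex_eq_iff cos_one_sin_zero)
  also have "\<dots> \<longleftrightarrow> (\<exists>n::int. a = of_int n)"
    unfolding cos_one_2pi_int by (auto simp: algebra_simps)
  finally show ?thesis by (auto elim: Ints_cases)
qed

lemma torus_exp_eq_iff: "torus_exp x = torus_exp y \<longleftrightarrow> int_vec (x - y)"
proof -
  have "cis (2 * pi * a) = cis (2 * pi * b) \<longleftrightarrow> a - b \<in> \<int>" for a b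
  proof -
    have "cis (2 * pi * a) = cis (2 * pi * b) \<longleftrightarrow> cis (2 * pi * a) / cis (2 * pi * b) = 1"
      by (metis cis_neq_zero divide_self nonzero_divide_eq_eq mult_1)
    also have "\<dots> \<longleftrightarrow> cis (2 * pi * (a - b)) = 1"
      by (simp add: cis_divide right_diff_distrib)
    finally show ?thesis by (simp add: cis_2pi_eq_1_iff)
  qed
  then show ?thesis by (simp add: torus_exp_def int_vec_def vec_eq_iff)
qed

definition torus_circle :: "real^'v::finite \<Rightarrow> (complex^'v) set" where
  "torus_circle s = range (\<lambda>c. torus_exp (s + c *\<^sub>R 1))"

lemma torus_circle_nonempty: "torus_circle s \<noteq> {}"
  by (simp add: torus_circle_def)

lemma torus_circle_connected: "connected (torus_circle s)"
  unfolding torus_circle_def torus_exp_def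
  by (intro connected_continuous_image continuous_intros) auto

lemma torus_circle_compact: "compact (torus_circle s)"
proof -
  have "torus_circle s = (\<lambda>c. torus_exp (s + c *\<^sub>R 1)) ` {0..1}"
  proof (intro equalityI subsetI)
    fix z assume "z \<in> torus_circle s"
    then obtain c where z: "z = torus_exp (s + c *\<^sub>R 1)" by (auto simp: torus_circle_def)
    have "z = torus_exp (s + frac c *\<^sub>R 1)"
      unfolding z torus_exp_eq_iff by (simp add: int_vec_def frac_def)
    moreover have "frac c \<in> {0..1}" using frac_lt_1[of c] by simp
    ultimately show "z \<in> (\<lambda>c. torus_exp (s + c *\<^sub>R 1)) ` {0..1}" by blast
  qed (auto simp: torus_circle_def)
  also have "compact \<dots>"
    unfolding torus_exp_def by (intro compact_continuous_image continuous_intros compact_Icc)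
  finally show ?thesis .
qed

section \<open>Graph Laplacians\<close>

text \<open>The graph Laplacian as an integer matrix: degrees on the diagonal, minus the edge
  multiplicities (a loop at \<open>v\<close> contributes nothing).\<close>
definition laplacian_mat :: "('v::finite \<Rightarrow> 'v \<Rightarrow> nat) \<Rightarrow> int^'v^'v" where
  "laplacian_mat em = (\<chi> v w. (if v = w then int (\<Sum>u\<in>UNIV. em v u) else 0) - int (em v w))"

lemma laplacian_eq_mult: "laplacian em x = of_int_mat (laplacian_mat em) *v x"
proof -
  have "(of_int_mat (laplacian_mat em) *v x) $ v = laplacian em x $ v" for v
  proof -
    let ?d = "real (\<Sum>u\<in>UNIV. em v u)"
    have "(of_int_mat (laplacian_mat em) *v x) $ v
        = (\<Sum>w\<in>UNIV. if v = w then ?d * x $ w else 0) - (\<Sum>w\<in>UNIV. real (em v w) * x $ w)"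
      unfolding sum_subtractf[symmetric]
      by (auto simp: matrix_vector_mult_def of_int_mat_def laplacian_mat_def left_diff_distrib
          intro!: sum.cong)
    also have "\<dots> = laplacian em x $ v"
      by (simp add: laplacian_def right_diff_distrib sum_subtractf sum_distrib_right)
    finally show ?thesis .
  qed
  then show ?thesis by (simp add: vec_eq_iff)
qed

lemma matrix_laplacian: "matrix (laplacian em) = of_int_mat (laplacian_mat em)"
  by (simp add: laplacian_eq_mult[abs_def])

lemma laplacian_add_const: "laplacian em (x + c *\<^sub>R 1) = laplacian em x"
  by (simp add: laplacian_def vec_eq_iff)

lemma laplacian_row_sums: "(\<Sum>w\<in>UNIV. of_int_mat (laplacian_mat em) $ v $ w) = 0"
proof -
  have "laplacian em 1 = 0" by (simp add: laplacian_def vec_eq_iff)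
  then show ?thesis by (simp add: laplacian_eq_mult vec_eq_iff matrix_vector_mult_def)
qed

lemma ground_mult:
  fixes A :: "'a::comm_ring_1^'n::finite^'n"
  shows "(ground r A *v x) $ v = (if v = r then x $ r else (A *v x) $ v - A $ v $ r * x $ r)"
proof (cases "v = r")
  case True
  have "(\<Sum>w\<in>UNIV. ground r A $ r $ w * x $ w) = (\<Sum>w\<in>UNIV. if w = r then x $ w else 0)"
    by (intro sum.cong) (auto simp: ground_def)
  then show ?thesis using True by (simp add: matrix_vector_mult_def)
next
  case False
  have "(\<Sum>w\<in>UNIV. ground r A $ v $ w * x $ w)
      = (\<Sum>w\<in>UNIV. A $ v $ w * x $ w - (if w = r then A $ v $ r * x $ r else 0))"
    using False by (intro sum.cong) (auto simp: ground_def)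
  then show ?thesis using False by (simp add: matrix_vector_mult_def sum_subtractf)
qed

lemma of_int_mat_ground: "of_int_mat (ground r M) = ground r (of_int_mat M)"
  by (simp add: of_int_mat_def ground_def vec_eq_iff)

lemma det_of_int_mat: "det (of_int_mat M) = of_int (det M)"
  unfolding of_int_mat_def by (rule det_ring_hom[symmetric]) simp_all

locale connected_multigraph =
  fixes em :: "'v::finite \<Rightarrow> 'v \<Rightarrow> nat"
  assumes sym: "\<And>v w. em v w = em w v"
    and connected: "\<And>u w. (u, w) \<in> {(a, b). 0 < em a b}\<^sup>*"
begin

abbreviation L :: "real^'v^'v" where "L \<equiv> of_int_mat (laplacian_mat em)"

lemma laplacian_symmetric: "L $ v $ w = L $ w $ v"
  by (simp add: of_int_mat_def laplacian_mat_def sym)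

lemma laplacian_col_sums: "(\<Sum>v\<in>UNIV. L $ v $ w) = 0"
  using laplacian_row_sums[of em w] by (simp add: laplacian_symmetric)

lemma sum_laplacian: "(\<Sum>v\<in>UNIV. laplacian em x $ v) = 0"
proof -
  have "(\<Sum>v\<in>UNIV. laplacian em x $ v) = (\<Sum>v\<in>UNIV. \<Sum>w\<in>UNIV. L $ v $ w * x $ w)"
    by (simp add: laplacian_eq_mult matrix_vector_mult_def)
  also have "\<dots> = (\<Sum>w\<in>UNIV. \<Sum>v\<in>UNIV. L $ v $ w * x $ w)"
    by (rule sum.swap)
  also have "\<dots> = (\<Sum>w\<in>UNIV. (\<Sum>v\<in>UNIV. L $ v $ w) * x $ w)"
    by (simp add: sum_distrib_right)
  finally show ?thesis by (simp add: laplacian_col_sums)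
qed

lemma laplacian_quadratic_form:
  "x \<bullet> laplacian em x = (\<Sum>v\<in>UNIV. \<Sum>w\<in>UNIV. real (em v w) * (x $ v - x $ w)\<^sup>2) / 2"
proof -
  let ?S = "\<Sum>v\<in>UNIV. \<Sum>w\<in>UNIV. real (em v w) * x $ v * (x $ v - x $ w)"
  let ?S' = "\<Sum>v\<in>UNIV. \<Sum>w\<in>UNIV. real (em v w) * x $ w * (x $ w - x $ v)"
  have S: "x \<bullet> laplacian em x = ?S"
    unfolding inner_vec_def laplacian_def by (simp add: sum_distrib_left mult_ac)
  have "?S = (\<Sum>w\<in>UNIV. \<Sum>v\<in>UNIV. real (em v w) * x $ v * (x $ v - x $ w))"
    by (rule sum.swap)
  also have "\<dots> = ?S'"
    by (simp add: sym)
  finally have "2 * ?S = ?S + ?S'" by simp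
  also have "\<dots> = (\<Sum>v\<in>UNIV. \<Sum>w\<in>UNIV.
      real (em v w) * x $ v * (x $ v - x $ w) + real (em v w) * x $ w * (x $ w - x $ v))"
    by (simp only: sum.distrib)
  also have "\<dots> = (\<Sum>v\<in>UNIV. \<Sum>w\<in>UNIV. real (em v w) * (x $ v - x $ w)\<^sup>2)"
    by (intro sum.cong refl) (simp add: power2_eq_square algebra_simps)
  finally show ?thesis using S by simp
qed

lemma laplacian_psd: "0 \<le> x \<bullet> (L *v x)"
  unfolding laplacian_eq_mult[symmetric] laplacian_quadratic_form
  by (intro divide_nonneg_pos sum_nonneg) auto

lemma laplacian_kernel:
  assumes "laplacian em x = 0"
  shows "x $ u = x $ w"
proof -
  have "(\<Sum>v\<in>UNIV. \<Sum>w\<in>UNIV. real (em v w) * (x $ v - x $ w)\<^sup>2) = 0"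
    using laplacian_quadratic_form[of x] assms by simp
  then have zero: "real (em v w) * (x $ v - x $ w)\<^sup>2 = 0" for v w
    by (simp add: sum_nonneg_eq_0_iff sum_nonneg)
  have edge: "x $ a = x $ b" if "0 < em a b" for a b
    using zero[of a b] that by auto
  show ?thesis
    using connected[of u w] by (induction rule: rtrancl_induct) (auto dest: edge)
qed

text \<open>For a connected graph every grounded Laplacian is nonsingular: a kernel vector
  vanishes at \<open>r\<close> and is harmonic, hence constant.\<close>
lemma det_ground_laplacian: "det (ground r (laplacian_mat em)) \<noteq> 0"
proof -
  have "y = 0" if y: "ground r L *v y = 0" for y
  proof -
    have r: "y $ r = 0" using ground_mult[of r L y r] y by simp
    have other: "laplacian em y $ v = 0" if "v \<noteq> r" for v
      using ground_mult[of r L y v] y r that by (simp add: laplacian_eq_mult)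
    have "laplacian em y $ r = - (\<Sum>v\<in>UNIV - {r}. laplacian em y $ v)"
      using sum_laplacian[of y] sum.remove[of UNIV r "\<lambda>v. laplacian em y $ v"] by simp
    then have "laplacian em y $ v = 0" for v
      using other by (cases "v = r") simp_all
    then have "laplacian em y = 0" by (simp add: vec_eq_iff)
    then have "y $ v = y $ r" for v by (rule laplacian_kernel)
    then show ?thesis using r by (simp add: vec_eq_iff)
  qed
  then have "det (ground r L) \<noteq> 0" using det_nz_iff_kernel by blast
  then show ?thesis by (simp flip: of_int_mat_ground add: det_of_int_mat)
qed

text \<open>Representatives of the harmonic points mod 1 with coordinate \<open>0\<close> at the root \<open>r\<close>.\<close>
abbreviation harmonic_reps :: "'v \<Rightarrow> (real^'v) set" where
  "harmonic_reps r \<equiv> frac_points (ground r (laplacian_mat em))"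

text \<open>Each representative vanishes at the root and is harmonic mod 1 (at the root because
  the values of the Laplacian sum to zero).\<close>
lemma harmonic_reps_root:
  assumes "s \<in> harmonic_reps r"
  shows "s $ r = 0"
proof -
  have "(ground r L *v s) $ r \<in> \<int>" "0 \<le> s $ r" "s $ r < 1"
    using assms by (auto simp: frac_points_def unit_box_def int_vec_def of_int_mat_ground)
  then show ?thesis using ground_mult[of r L s r] by (metis frac_eq frac_eq_0_iff)
qed

lemma harmonic_reps_harmonic:
  assumes s: "s \<in> harmonic_reps r"
  shows "int_vec (laplacian em s)"
proof -
  have other: "laplacian em s $ v \<in> \<int>" if "v \<noteq> r" for v
  proof -
    have "(ground r L *v s) $ v \<in> \<int>"
      using s by (simp add: frac_points_def int_vec_def of_int_mat_ground)
    then show ?thesis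
      using ground_mult[of r L s v] harmonic_reps_root[OF s] that by (simp add: laplacian_eq_mult)
  qed
  moreover have "laplacian em s $ r = - (\<Sum>v\<in>UNIV - {r}. laplacian em s $ v)"
    using sum_laplacian[of s] sum.remove[of UNIV r "\<lambda>v. laplacian em s $ v"] by simp
  then have "laplacian em s $ r \<in> \<int>"
    using other by (auto intro!: Ints_sum)
  ultimately show ?thesis by (metis int_vec_def)
qed

text \<open>The harmonic points mod 1 are the union of the circles through the representatives:
  a harmonic lift \<open>y\<close> is shifted by a constant to vanish at \<open>r\<close> and then reduced mod 1.\<close>
lemma harmonic_mod1_eq_circles: "harmonic_mod1 em = \<Union> (torus_circle ` harmonic_reps r)"
proof (intro equalityI subsetI)
  fix z assume "z \<in> harmonic_mod1 em"
  then obtain y where y: "int_vec (laplacian em y)" and z: "z = torus_exp y"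
    by (auto simp: harmonic_mod1_def int_vec_def)
  define c where "c = y $ r"
  define s where "s = frac_vec (y - c *\<^sub>R 1)"
  have int: "int_vec (y - c *\<^sub>R 1 - s)" unfolding s_def by (rule int_vec_minus_frac_vec)
  have "s $ r = 0" by (simp add: s_def frac_vec_def c_def)
  moreover have "int_vec (laplacian em s)"
  proof -
    have "laplacian em s = laplacian em (y - c *\<^sub>R 1) - L *v (y - c *\<^sub>R 1 - s)"
      by (simp add: laplacian_eq_mult matrix_vector_mult_diff_distrib)
    also have "laplacian em (y - c *\<^sub>R 1) = laplacian em y"
      using laplacian_add_const[of em y "- c"] by simp
    finally show ?thesis
      using int_vec_diff[OF y int_vec_of_int_mat_mult[OF int, of "laplacian_mat em"]] by simp
  qed
  ultimately have "int_vec (of_int_mat (ground r (laplacian_mat em)) *v s)"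
    using ground_mult[of r L s] by (simp add: int_vec_def of_int_mat_ground laplacian_eq_mult)
  then have "s \<in> harmonic_reps r"
    by (simp add: frac_points_def s_def frac_vec_unit_box)
  moreover have "z = torus_exp (s + c *\<^sub>R 1)"
    unfolding z torus_exp_eq_iff using int by (simp add: int_vec_def algebra_simps)
  ultimately show "z \<in> \<Union> (torus_circle ` harmonic_reps r)"
    by (auto simp: torus_circle_def)
next
  fix z assume "z \<in> \<Union> (torus_circle ` harmonic_reps r)"
  then obtain s c where s: "s \<in> harmonic_reps r" and z: "z = torus_exp (s + c *\<^sub>R 1)"
    by (auto simp: torus_circle_def)
  then show "z \<in> harmonic_mod1 em"
    using harmonic_reps_harmonic[OF s] laplacian_add_const[of em s c]
    by (auto simp: harmonic_mod1_def int_vec_def)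
qed

text \<open>Circles through distinct representatives are disjoint: the root coordinate
  determines the shift along the circle.\<close>
lemma torus_circles_disjoint:
  assumes s: "s \<in> harmonic_reps r" and s': "s' \<in> harmonic_reps r"
    and meet: "torus_circle s \<inter> torus_circle s' \<noteq> {}"
  shows "s = s'"
proof -
  obtain c c' where "torus_exp (s + c *\<^sub>R 1) = torus_exp (s' + c' *\<^sub>R 1)"
    using meet by (auto simp: torus_circle_def)
  then have diff: "int_vec (s - s' + (c - c') *\<^sub>R 1)"
    by (simp add: torus_exp_eq_iff algebra_simps)
  then have "(s - s' + (c - c') *\<^sub>R 1) $ r \<in> \<int>" unfolding int_vec_def by blast
  then have "c - c' \<in> \<int>"
    using harmonic_reps_root[OF s] harmonic_reps_root[OF s'] by simp
  then have "int_vec (s - s')"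
    using int_vec_diff[OF diff, of "(c - c') *\<^sub>R 1"] by (simp add: int_vec_def)
  then show ?thesis
    using frac_vec_eqI[of s s] frac_vec_eqI[of s' s] s s'
    by (simp add: frac_points_def int_vec_def)
qed

theorem card_components_harmonic_mod1:
  "card (components (harmonic_mod1 em)) = nat \<bar>det (ground r (laplacian_mat em))\<bar>"
proof -
  have "card (harmonic_reps r) > 0"
    using card_frac_points[OF det_ground_laplacian] det_ground_laplacian by simp
  then have fin: "finite (harmonic_reps r)" by (rule card_ge_0_finite)
  have "components (harmonic_mod1 em) = torus_circle ` harmonic_reps r"
    unfolding harmonic_mod1_eq_circles[of r]
  proof (rule components_finite_disjoint_Union)
    show "pairwise disjnt (torus_circle ` harmonic_reps r)"
      using torus_circles_disjoint by (auto simp: pairwise_def disjnt_def)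
  qed (auto simp: fin torus_circle_compact torus_circle_connected torus_circle_nonempty)
  moreover have "inj_on torus_circle (harmonic_reps r)"
    using torus_circles_disjoint by (auto simp: inj_on_def torus_circle_def)
  ultimately show ?thesis
    by (simp add: card_image card_frac_points[OF det_ground_laplacian])
qed

end

theorem lemma3p5:
  fixes em :: "'v::finite \<Rightarrow> 'v \<Rightarrow> nat"
  assumes "multigraph em" and "graph_connected em"
  shows "real (card (components (harmonic_mod1 em)))
           = det_star (matrix (laplacian em)) / real CARD('v)"
proof -
  interpret connected_multigraph em
    using assms by unfold_locales (auto simp: multigraph_def graph_connected_def)
  fix r :: 'v
  have "det_star L = real CARD('v) * \<bar>det (ground r L)\<bar>"
    using laplacian_symmetric laplacian_row_sums laplacian_psd det_ground_laplacian
    by (intro det_star_ground) (simp_all flip: of_int_mat_ground add: det_of_int_mat)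
  then show ?thesis
    by (simp add: matrix_laplacian card_components_harmonic_mod1[of r]
        flip: of_int_mat_ground add: det_of_int_mat)
qed

end
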